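(* Let $k\ge 2$, let $B=M\cup\{\omega_1,\ldots,\omega_p\}$ with $p\ge 1$ and $\omega_1,\ldots,\omega_p\in P_k\setminus M$, and let $F$ be a finite system of functions from $P_k(n)$ (for some $n\ge 1$). Then $$d(F)\le (d(B)+1)^{I_B(F)}-1 .$$
   Context: Let $k\ge 2$ be an integer and $E_k=\{0,1,\ldots,k-1\}$. $P_k(n)$ denotes the set of all functions $E_k^n\to E_k$ ($k$-valued logic functions of $n$ arguments), and $P_k=\bigcup_n P_k(n)$. Tuples in $E_k^n$ are ordered componentwise: $\tilde\alpha\le\tilde\beta$ iff $\alpha_j\le\beta_j$ for all $j$. A function $f$ is monotone if $\tilde\alpha\le\tilde\beta$ implies $f(\tilde\alpha)\le f(\tilde\beta)$; $M$ is the set of all monotone functions in $P_k$ (of all arities, including constants). A basis is a set $B=M\cup\{\omega_1,\ldots,\omega_p\}$ with $p\ge1$ and $\omega_i\in P_k\setminus M$. A circuit over $B$ with inputs $x_1,\ldots,x_n$ is a finite directed acyclic graph whose source nodes are labelled by the variables $x_1,\ldots,x_n$ and each of whose other nodes (gates) is labelled by a $q$-ary function from $B$ and has $q$ ordered incoming edges; each node computes a function of $P_k(n)$ in the obvious way. A circuit realizes a system $F$ of functions of $x_1,\ldots,x_n$ if every function of $F$ is computed at some node. Gates labelled by functions of $M$ have weight $0$, gates labelled by some $\omega_i$ have weight $1$. The non-monotone complexity $I_B(S)$ of a circuit $S$ is the sum of the weights of its gates; $I_B(F)$ is the minimum of $I_B(S)$ over all circuits $S$ over $B$ realizing $F$,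 and $I_B(f)=I_B(\{f\})$. A chain is a sequence $\tilde\alpha_1,\ldots,\tilde\alpha_r$ of pairwise distinct tuples of $E_k^n$ with $\tilde\alpha_i\le\tilde\alpha_{i+1}$ for $i=1,\ldots,r-1$. A pair $(\tilde\alpha,\tilde\beta)$ with $\tilde\alpha\le\tilde\beta$ is a jump for a system $F$ if $f(\tilde\alpha)>f(\tilde\beta)$ for at least one $f\in F$. For a chain $C=(\tilde\alpha_1,\ldots,\tilde\alpha_r)$, the decrease $d_C(F)$ is the number of $i\in\{1,\ldots,r-1\}$ such that $(\tilde\alpha_i,\tilde\alpha_{i+1})$ is a jump for $F$. The decrease $d(F)$ is the maximum of $d_C(F)$ over all chains $C$ in $E_k^n$; $d(f)=d(\{f\})$. Finally $d(B)=\max\{d(\omega_1),\ldots,d(\omega_p)\}$. *)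

theory Defs
  imports Main
begin

text \<open>Tuples of E_k^n are lists of length n with entries < k; a k-valued
function of q arguments is a map nat list => nat whose values on E_k^q lie in E_k
(only its values on E_k^q matter).\<close>

definition Ek :: "nat \<Rightarrow> nat \<Rightarrow> nat list set" where
  "Ek k n = {xs. length xs = n \<and> (\<forall>a\<in>set xs. a < k)}"

definition tle :: "nat list \<Rightarrow> nat list \<Rightarrow> bool" where
  "tle a b \<longleftrightarrow> list_all2 (\<le>) a b"

definition Pk :: "nat \<Rightarrow> nat \<Rightarrow> (nat list \<Rightarrow> nat) set" where
  "Pk k q = {f. \<forall>x\<in>Ek k q. f x < k}"

definition monotone_k :: "nat \<Rightarrow> nat \<Rightarrow> (nat list \<Rightarrow> nat) \<Rightarrow> bool" where
  "monotone_k k q f \<longleftrightarrow> (\<forall>a\<in>Ek k q. \<forall>b\<in>Ek k q. tle a b \<longrightarrow> f a \<le> f b)"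

definition Mk :: "nat \<Rightarrow> nat \<Rightarrow> (nat list \<Rightarrow> nat) set" where
  "Mk k q = {f \<in> Pk k q. monotone_k k q f}"

text \<open>Circuits as topologically sorted straight-line programs.
 Nodes 0..n-1 are the inputs x_1..x_n, node n+j is gate j.
 A gate label is either a monotone function of arity q (weight 0), or
 the i-th non-monotone basis function omega_i (weight 1).
 The basis non-monotone part is a list ws of pairs (arity, function).\<close>

datatype glabel = Mono nat "nat list \<Rightarrow> nat" | Om nat

type_synonym gate = "glabel \<times> nat list"

fun gapply :: "(nat \<times> (nat list \<Rightarrow> nat)) list \<Rightarrow> glabel \<Rightarrow> nat list \<Rightarrow> nat" where
  "gapply ws (Mono q g) args = g args"
| "gapply ws (Om i) args = snd (ws ! i) args"

fun run :: "(nat \<times> (nat list \<Rightarrow> nat)) list \<Rightarrow> gate list \<Rightarrow> nat list \<Rightarrow> nat list" where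
  "run ws [] vs = vs"
| "run ws ((l, ins) # gs) vs = run ws gs (vs @ [gapply ws l (map (\<lambda>j. vs ! j) ins)])"

fun gate_ok :: "nat \<Rightarrow> (nat \<times> (nat list \<Rightarrow> nat)) list \<Rightarrow> nat \<Rightarrow> gate \<Rightarrow> bool" where
  "gate_ok k ws m (Mono q g, ins) \<longleftrightarrow> g \<in> Mk k q \<and> length ins = q \<and> (\<forall>j\<in>set ins. j < m)"
| "gate_ok k ws m (Om i, ins) \<longleftrightarrow> i < length ws \<and> length ins = fst (ws ! i) \<and> (\<forall>j\<in>set ins. j < m)"

definition circuit :: "nat \<Rightarrow> nat \<Rightarrow> (nat \<times> (nat list \<Rightarrow> nat)) list \<Rightarrow> gate list \<Rightarrow> bool" where
  "circuit k n ws gs \<longleftrightarrow> (\<forall>j < length gs. gate_ok k ws (n + j) (gs ! j))"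

definition realizes :: "nat \<Rightarrow> nat \<Rightarrow> (nat \<times> (nat list \<Rightarrow> nat)) list \<Rightarrow> gate list
    \<Rightarrow> (nat list \<Rightarrow> nat) set \<Rightarrow> bool" where
  "realizes k n ws gs F \<longleftrightarrow>
     (\<forall>f\<in>F. \<exists>v < n + length gs. \<forall>x\<in>Ek k n. run ws gs x ! v = f x)"

definition is_om :: "glabel \<Rightarrow> bool" where
  "is_om l \<longleftrightarrow> (case l of Om _ \<Rightarrow> True | Mono _ _ \<Rightarrow> False)"

definition weight :: "gate list \<Rightarrow> nat" where
  "weight gs = length (filter (\<lambda>g. is_om (fst g)) gs)"

definition IB :: "nat \<Rightarrow> nat \<Rightarrow> (nat \<times> (nat list \<Rightarrow> nat)) list \<Rightarrow> (nat list \<Rightarrow> nat) set \<Rightarrow> nat" where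
  "IB k n ws F = (LEAST w. \<exists>gs. circuit k n ws gs \<and> realizes k n ws gs F \<and> weight gs = w)"

definition is_chain :: "nat \<Rightarrow> nat \<Rightarrow> nat list list \<Rightarrow> bool" where
  "is_chain k n C \<longleftrightarrow> C \<noteq> [] \<and> set C \<subseteq> Ek k n \<and> distinct C \<and>
     (\<forall>i. Suc i < length C \<longrightarrow> tle (C ! i) (C ! Suc i))"

definition jump :: "(nat list \<Rightarrow> nat) set \<Rightarrow> nat list \<Rightarrow> nat list \<Rightarrow> bool" where
  "jump F a b \<longleftrightarrow> tle a b \<and> (\<exists>f\<in>F. f a > f b)"

definition decC :: "(nat list \<Rightarrow> nat) set \<Rightarrow> nat list list \<Rightarrow> nat" where
  "decC F C = card {i. Suc i < length C \<and> jump F (C ! i) (C ! Suc i)}"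

definition dec :: "nat \<Rightarrow> nat \<Rightarrow> (nat list \<Rightarrow> nat) set \<Rightarrow> nat" where
  "dec k n F = Max {decC F C | C. is_chain k n C}"

definition dB :: "nat \<Rightarrow> (nat \<times> (nat list \<Rightarrow> nat)) list \<Rightarrow> nat" where
  "dB k ws = Max ((\<lambda>w. dec k (fst w) {snd w}) ` set ws)"

end

theory Submission
  imports Defs
begin

text \<open>Fix a circuit of minimal weight realizing \<open>F\<close> and a chain. Call a step of the chain
  bad if the vector of all node values does not increase there; every jump of \<open>F\<close> is a bad
  step. Appending a monotone gate creates no new bad step. Between two consecutive bad steps the
  inputs of an appended \<open>\<omega>\<close>-gate increase, so \<open>\<omega>\<close> decreases at most \<open>d(B)\<close> times there;
  hence appending it turns \<open>b\<close> bad steps into at most \<open>(d(B) + 1) (b + 1) - 1\<close>, and induction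
  over the gates gives \<open>d(F) + 1 \<le> (d(B) + 1) ^ I_B(F)\<close>.

  That a circuit realizing \<open>F\<close> exists at all, so that \<open>I_B(F)\<close> is attained, uses a
  non-monotone \<open>\<omega>\<close> with \<open>a \<le> b\<close> and \<open>\<omega> b < \<omega> a\<close>: applied to \<open>a\<close> or \<open>b\<close> according to the
  thresholds \<open>x\<^sub>j \<le> c\<close>, it extends every input tuple to a code, distinct tuples get
  incomparable codes, and then every function is a monotone function of the code.\<close>

section \<open>Componentwise order and circuit evaluation\<close>

lemma tle_iff_nth: "tle a b \<longleftrightarrow> length a = length b \<and> (\<forall>i<length a. a!i \<le> b!i)"
  by (simp add: tle_def list_all2_conv_all_nth)

lemma tle_refl [simp]: "tle a a"
  by (simp add: tle_iff_nth)

lemma tle_trans: "tle a b \<Longrightarrow> tle b c \<Longrightarrow> tle a c"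
  by (fastforce simp: tle_iff_nth intro: order_trans)

lemma tle_antisym: "tle a b \<Longrightarrow> tle b a \<Longrightarrow> a = b"
  by (auto simp: tle_iff_nth intro!: nth_equalityI antisym)

lemma tle_append:
  "length xs = length ys \<Longrightarrow> tle (xs @ xs') (ys @ ys') \<longleftrightarrow> tle xs ys \<and> tle xs' ys'"
  by (simp add: tle_def list_all2_append)

lemma tle_map_nth:
  "tle a b \<Longrightarrow> \<forall>j\<in>set ins. j < length a \<Longrightarrow> tle (map (\<lambda>j. a!j) ins) (map (\<lambda>j. b!j) ins)"
  by (auto simp: tle_iff_nth)

lemma finite_Ek: "finite (Ek k n)"
proof -
  have "Ek k n \<subseteq> {xs. set xs \<subseteq> {..<k} \<and> length xs = n}"
    by (auto simp: Ek_def)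
  thus ?thesis
    by (rule finite_subset) (simp add: finite_lists_length_eq)
qed

lemma length_run [simp]: "length (run ws gs vs) = length vs + length gs"
  by (induction ws gs vs rule: run.induct) auto

lemma run_append: "run ws (gs @ hs) vs = run ws hs (run ws gs vs)"
  by (induction ws gs vs rule: run.induct) auto

lemma run_snoc:
  "run ws (gs @ [(l, ins)]) vs = run ws gs vs @ [gapply ws l (map (\<lambda>j. run ws gs vs ! j) ins)]"
  by (simp add: run_append)

lemma run_parallel:
  "\<forall>g\<in>set gs. \<forall>j\<in>set (snd g). j < length vs \<Longrightarrow>
   run ws gs vs = vs @ map (\<lambda>g. gapply ws (fst g) (map (\<lambda>j. vs ! j) (snd g))) gs"
proof (induction gs arbitrary: vs)
  case Nil
  thus ?case by simp
next
  case (Cons g gs)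
  obtain l ins where g: "g = (l, ins)"
    by fastforce
  define x where "x = gapply ws l (map (\<lambda>j. vs ! j) ins)"
  have reads_vs: "gapply ws (fst h) (map (\<lambda>j. (vs @ [x]) ! j) (snd h))
      = gapply ws (fst h) (map (\<lambda>j. vs ! j) (snd h))" if "h \<in> set gs" for h
    using Cons.prems that by (auto simp: nth_append cong: map_cong)
  have "run ws (g # gs) vs = run ws gs (vs @ [x])"
    by (simp add: g x_def)
  also have "\<dots> = (vs @ [x]) @ map (\<lambda>h. gapply ws (fst h) (map (\<lambda>j. (vs @ [x]) ! j) (snd h))) gs"
    using Cons.prems by (intro Cons.IH) (fastforce simp: less_Suc_eq)
  also have "\<dots> = (vs @ [x]) @ map (\<lambda>h. gapply ws (fst h) (map (\<lambda>j. vs ! j) (snd h))) gs"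
    using reads_vs by (simp cong: map_cong)
  finally show ?case
    by (simp add: g x_def)
qed

lemma gate_ok_mono: "gate_ok k ws m g \<Longrightarrow> m \<le> m' \<Longrightarrow> gate_ok k ws m' g"
  by (cases "(k, ws, m, g)" rule: gate_ok.cases) auto

lemma circuit_snoc:
  "circuit k n ws (gs @ [g]) \<longleftrightarrow> circuit k n ws gs \<and> gate_ok k ws (n + length gs) g"
  unfolding circuit_def by (auto simp: nth_append less_Suc_eq)

lemma circuit_append:
  assumes "circuit k n ws gs" and "\<forall>g\<in>set hs. gate_ok k ws (n + length gs) g"
  shows "circuit k n ws (gs @ hs)"
  unfolding circuit_def
proof (intro allI impI)
  fix j
  assume j: "j < length (gs @ hs)"
  show "gate_ok k ws (n + j) ((gs @ hs) ! j)"
  proof (cases "j < length gs")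
    case True
    thus ?thesis using assms(1) by (simp add: circuit_def nth_append)
  next
    case False
    hence "gate_ok k ws (n + length gs) (hs ! (j - length gs))"
      using assms(2) j by simp
    thus ?thesis
      using False by (simp add: nth_append) (erule gate_ok_mono, simp)
  qed
qed

lemma run_values_less:
  assumes "circuit k n ws gs" and "x \<in> Ek k n" and "\<forall>w\<in>set ws. snd w \<in> Pk k (fst w)"
  shows "\<forall>v\<in>set (run ws gs x). v < k"
  using assms(1)
proof (induction gs rule: rev_induct)
  case Nil
  thus ?case using assms(2) by (simp add: Ek_def)
next
  case (snoc g gs)
  obtain l ins where g: "g = (l, ins)"
    by fastforce
  from snoc.prems have gate: "gate_ok k ws (n + length gs) (l, ins)"
    and IH: "\<forall>v\<in>set (run ws gs x). v < k"
    using snoc.IH by (auto simp: circuit_snoc g)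
  have "length (run ws gs x) = n + length gs"
    using assms(2) by (simp add: Ek_def)
  hence args: "map (\<lambda>j. run ws gs x ! j) ins \<in> Ek k (length ins)"
    using gate IH by (cases l) (auto simp: Ek_def)
  have "gapply ws l (map (\<lambda>j. run ws gs x ! j) ins) < k"
  proof (cases l)
    case (Mono q f)
    thus ?thesis using gate args by (auto simp: Mk_def Pk_def)
  next
    case (Om i)
    thus ?thesis using gate args assms(3) by (auto simp: Pk_def)
  qed
  thus ?case
    using IH by (simp add: g run_snoc)
qed

lemma weight_snoc: "weight (gs @ [(l, ins)]) = weight gs + (if is_om l then 1 else 0)"
  by (simp add: weight_def)

section \<open>Chains and decrease\<close>

lemma decC_le_length: "decC F C \<le> length C"
proof -
  have "{i. Suc i < length C \<and> jump F (C ! i) (C ! Suc i)} \<subseteq> {..<length C}"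
    by auto
  thus ?thesis
    unfolding decC_def by (metis card_lessThan card_mono finite_lessThan)
qed

lemma finite_decC_chains: "finite {decC F C | C. is_chain k n C}"
proof (rule finite_subset)
  show "{decC F C | C. is_chain k n C} \<subseteq> {..card (Ek k n)}"
  proof
    fix x
    assume "x \<in> {decC F C | C. is_chain k n C}"
    then obtain C where C: "is_chain k n C" "x = decC F C"
      by blast
    have "length C = card (set C)"
      using C by (simp add: is_chain_def distinct_card)
    also have "\<dots> \<le> card (Ek k n)"
      using C by (intro card_mono finite_Ek) (auto simp: is_chain_def)
    finally show "x \<in> {..card (Ek k n)}"
      using decC_le_length[of F C] C by simp
  qed
qed simp

lemma decC_le_dec: "is_chain k n C \<Longrightarrow> decC F C \<le> dec k n F"
  unfolding dec_def using finite_decC_chains by (intro Max_ge) auto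

lemma dec_le_dB: "w \<in> set ws \<Longrightarrow> dec k (fst w) {snd w} \<le> dB k ws"
  unfolding dB_def by (rule Max_ge) auto

lemma is_chain_snoc:
  assumes "is_chain k n C" and "y \<in> Ek k n" and "y \<notin> set C" and "tle (last C) y"
  shows "is_chain k n (C @ [y])"
proof -
  have "C \<noteq> []"
    using assms(1) by (simp add: is_chain_def)
  have "tle (C ! i) y" if "Suc i = length C" for i
    using assms(4) that \<open>C \<noteq> []\<close> by (metis diff_Suc_1 last_conv_nth)
  thus ?thesis
    using assms(1-3) by (auto simp: is_chain_def nth_append less_Suc_eq)
qed

lemma decC_snoc:
  assumes "C \<noteq> []"
  shows "decC F (C @ [y]) = decC F C + (if jump F (last C) y then 1 else 0)"
proof -
  have last_C: "C ! i = last C" if "i < length C" "\<not> Suc i < length C" for i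
  proof -
    have "i = length C - 1"
      using that by linarith
    thus ?thesis
      using assms by (simp add: last_conv_nth)
  qed
  have "{i. Suc i < length (C @ [y]) \<and> jump F ((C @ [y]) ! i) ((C @ [y]) ! Suc i)}
     = {i. Suc i < length C \<and> jump F (C ! i) (C ! Suc i)}
       \<union> (if jump F (last C) y then {length C - 1} else {})"
    using assms last_C by (auto simp: nth_append less_Suc_eq split: if_splits)
  moreover have "finite {i. Suc i < length C \<and> jump F (C ! i) (C ! Suc i)}"
    by (rule finite_subset[of _ "{..<length C}"]) auto
  ultimately show ?thesis
    unfolding decC_def using assms by auto
qed

text \<open>Repeated tuples are skipped; the invariant that all tuples of the chain lie below
  \<open>a m\<close> keeps a new tuple distinct from them.\<close>

lemma chain_of_monotone_sequence:
  assumes mono: "\<And>i. l \<le> i \<Longrightarrow> i < m \<Longrightarrow> tle (a i) (a (Suc i))"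
    and in_Ek: "\<And>i. l \<le> i \<Longrightarrow> i \<le> m \<Longrightarrow> a i \<in> Ek k q"
    and "l \<le> m"
  shows "\<exists>C. is_chain k q C \<and> last C = a m \<and> (\<forall>x\<in>set C. tle x (a m)) \<and>
           card {i. l \<le> i \<and> i < m \<and> f (a i) > f (a (Suc i))} \<le> decC {f} C"
  using \<open>l \<le> m\<close>
proof (induction m rule: dec_induct)
  case base
  have no_descents: "{i. l \<le> i \<and> i < l \<and> f (a i) > f (a (Suc i))} = {}"
    by auto
  have "is_chain k q [a l]"
    using in_Ek[of l] \<open>l \<le> m\<close> by (simp add: is_chain_def)
  thus ?case
    by (intro exI[of _ "[a l]"]) (simp add: no_descents)
next
  case (step j)
  then obtain C where C: "is_chain k q C" "last C = a j" "\<forall>x\<in>set C. tle x (a j)"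
    "card {i. l \<le> i \<and> i < j \<and> f (a i) > f (a (Suc i))} \<le> decC {f} C"
    by blast
  have step_tle: "tle (a j) (a (Suc j))"
    using mono step by simp
  have descents_Suc: "{i. l \<le> i \<and> i < Suc j \<and> f (a i) > f (a (Suc i))} =
     {i. l \<le> i \<and> i < j \<and> f (a i) > f (a (Suc i))} \<union> (if f (a j) > f (a (Suc j)) then {j} else {})"
    using step by (auto simp: less_Suc_eq)
  have finite_descents: "finite {i. l \<le> i \<and> i < j \<and> f (a i) > f (a (Suc i))}"
    by (rule finite_subset[of _ "{..<j}"]) auto
  show ?case
  proof (cases "a (Suc j) = a j")
    case True
    thus ?thesis
      using C descents_Suc by (intro exI[of _ C]) auto
  next
    case False
    have "C \<noteq> []"
      using C by (simp add: is_chain_def)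
    have "a (Suc j) \<notin> set C"
      using C(3) tle_antisym[OF step_tle] False by metis
    hence chain: "is_chain k q (C @ [a (Suc j)])"
      using is_chain_snoc[OF C(1)] in_Ek[of "Suc j"] step.hyps step_tle C(2) by simp
    have "decC {f} (C @ [a (Suc j)]) = decC {f} C + (if f (a j) > f (a (Suc j)) then 1 else 0)"
      using decC_snoc[OF \<open>C \<noteq> []\<close>] C step_tle by (simp add: jump_def)
    hence "card {i. l \<le> i \<and> i < Suc j \<and> f (a i) > f (a (Suc i))} \<le> decC {f} (C @ [a (Suc j)])"
      unfolding descents_Suc using C(4) finite_descents by (auto simp: card_insert_if)
    moreover have "\<forall>x\<in>set (C @ [a (Suc j)]). tle x (a (Suc j))"
      using C step_tle tle_trans by auto
    ultimately show ?thesis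
      using chain by (intro exI[of _ "C @ [a (Suc j)]"]) auto
  qed
qed

lemma card_descents_le_dec:
  assumes "\<And>i. l \<le> i \<Longrightarrow> i < m \<Longrightarrow> tle (a i) (a (Suc i))"
    and "\<And>i. l \<le> i \<Longrightarrow> i \<le> m \<Longrightarrow> a i \<in> Ek k q"
    and "l \<le> m"
  shows "card {i. l \<le> i \<and> i < m \<and> f (a i) > f (a (Suc i))} \<le> dec k q {f}"
  using chain_of_monotone_sequence[of l m a k q f, OF assms] decC_le_dec le_trans by blast

section \<open>Non-monotone steps of a circuit along a chain\<close>

lemma card_split_at:
  fixes K :: "nat set"
  assumes "K \<subseteq> {..<r}" and "j \<notin> K"
  shows "card K \<le> card (K \<inter> {..<j}) + card (K \<inter> {Suc j..<r})"
proof -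
  have "K \<subseteq> (K \<inter> {..<j}) \<union> (K \<inter> {Suc j..<r})"
  proof
    fix x
    assume "x \<in> K"
    hence "x < r" "x \<noteq> j"
      using assms by auto
    thus "x \<in> (K \<inter> {..<j}) \<union> (K \<inter> {Suc j..<r})"
      using \<open>x \<in> K\<close> by auto
  qed
  hence "card K \<le> card ((K \<inter> {..<j}) \<union> (K \<inter> {Suc j..<r}))"
    by (intro card_mono) auto
  also have "\<dots> \<le> card (K \<inter> {..<j}) + card (K \<inter> {Suc j..<r})"
    by (rule card_Un_le)
  finally show ?thesis .
qed

lemma card_le_by_gaps:
  fixes J K :: "nat set"
  assumes "finite J" "J \<subseteq> {..<r}" "K \<subseteq> {..<r}" "K \<inter> J = {}"
    and "\<And>l m. l \<le> m \<Longrightarrow> m \<le> r \<Longrightarrow> {l..<m} \<inter> J = {} \<Longrightarrow> card (K \<inter> {l..<m}) \<le> d"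
  shows "card K \<le> d * (card J + 1)"
  using assms
proof (induction "card J" arbitrary: r J K)
  case 0
  hence "J = {}" and "K \<inter> {0..<r} = K"
    by auto
  thus ?case
    using "0.prems"(5)[of 0 r] by simp
next
  case (Suc N)
  define j where "j = Max J"
  have "J \<noteq> {}"
    using Suc.hyps(2) by auto
  hence "j \<in> J" and j_max: "\<And>x. x \<in> J \<Longrightarrow> x \<le> j"
    using Suc.prems(1) by (simp_all add: j_def)
  hence "j < r"
    using Suc.prems(2) by auto
  define J0 where "J0 = J - {j}"
  define K0 where "K0 = K \<inter> {..<j}"
  have card_J0: "N = card J0"
    using Suc.hyps(2) \<open>j \<in> J\<close> Suc.prems(1) by (simp add: J0_def)
  have "card K0 \<le> d * (card J0 + 1)"
  proof (rule Suc.hyps(1)[OF card_J0])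
    show "finite J0" "K0 \<subseteq> {..<j}" "K0 \<inter> J0 = {}"
      using Suc.prems(1,4) by (auto simp: J0_def K0_def)
    show "J0 \<subseteq> {..<j}"
      using j_max by (fastforce simp: J0_def dest: le_neq_implies_less)
    fix l m
    assume lm: "l \<le> m" "m \<le> j" "{l..<m} \<inter> J0 = {}"
    moreover have "j \<notin> {l..<m}"
      using lm by simp
    ultimately have "{l..<m} \<inter> J = {}"
      unfolding J0_def by blast
    moreover have "K0 \<inter> {l..<m} = K \<inter> {l..<m}"
      using lm by (auto simp: K0_def)
    ultimately show "card (K0 \<inter> {l..<m}) \<le> d"
      using Suc.prems(5)[of l m] lm \<open>j < r\<close> by simp
  qed
  moreover have "card (K \<inter> {Suc j..<r}) \<le> d"
    using Suc.prems(5)[of "Suc j" r] \<open>j < r\<close> j_max by force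
  moreover have "card K \<le> card K0 + card (K \<inter> {Suc j..<r})"
    using card_split_at[of K r j] Suc.prems(3,4) \<open>j \<in> J\<close> by (auto simp: K0_def)
  moreover have "card J = card J0 + 1"
    using card_J0 Suc.hyps(2) by simp
  ultimately show ?case
    by (simp add: algebra_simps)
qed

lemma card_descents_outside_le:
  assumes "finite J" "J \<subseteq> {..<r}"
    and mono: "\<And>i. Suc i \<le> r \<Longrightarrow> i \<notin> J \<Longrightarrow> tle (A i) (A (Suc i))"
    and in_Ek: "\<And>i. i \<le> r \<Longrightarrow> A i \<in> Ek k q"
  shows "card {i. i < r \<and> i \<notin> J \<and> \<omega> (A i) > \<omega> (A (Suc i))} \<le> dec k q {\<omega>} * (card J + 1)"
proof (rule card_le_by_gaps[OF assms(1,2)])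
  fix l m
  assume gap: "l \<le> m" "m \<le> r" "{l..<m} \<inter> J = {}"
  have "{i. i < r \<and> i \<notin> J \<and> \<omega> (A i) > \<omega> (A (Suc i))} \<inter> {l..<m}
      = {i. l \<le> i \<and> i < m \<and> \<omega> (A i) > \<omega> (A (Suc i))}"
    using gap by auto
  also have "card \<dots> \<le> dec k q {\<omega>}"
    using gap by (intro card_descents_le_dec mono in_Ek) auto
  finally show "card ({i. i < r \<and> i \<notin> J \<and> \<omega> (A i) > \<omega> (A (Suc i))} \<inter> {l..<m}) \<le> dec k q {\<omega>}" .
qed auto

definition nonmono_steps :: "(nat \<times> (nat list \<Rightarrow> nat)) list \<Rightarrow> gate list \<Rightarrow> nat list list \<Rightarrow> nat set" where
  "nonmono_steps ws gs C = {i. Suc i < length C \<and> \<not> tle (run ws gs (C ! i)) (run ws gs (C ! Suc i))}"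

lemma finite_nonmono_steps: "finite (nonmono_steps ws gs C)"
  by (rule finite_subset[of _ "{..<length C}"]) (auto simp: nonmono_steps_def)

lemma nonmono_steps_Nil:
  "is_chain k n C \<Longrightarrow> nonmono_steps ws [] C = {}"
  by (auto simp: nonmono_steps_def is_chain_def)

lemma card_nonmono_steps_snoc:
  fixes ws :: "(nat \<times> (nat list \<Rightarrow> nat)) list" and gs :: "gate list" and ins :: "nat list"
  assumes "is_chain k n C"
  defines "A \<equiv> \<lambda>i. map (\<lambda>j. run ws gs (C ! i) ! j) ins"
  shows "card (nonmono_steps ws (gs @ [(l, ins)]) C) \<le> card (nonmono_steps ws gs C) +
    card {i. Suc i < length C \<and> i \<notin> nonmono_steps ws gs C \<and> gapply ws l (A i) > gapply ws l (A (Suc i))}"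
    (is "card ?new \<le> card ?old + card ?K")
proof -
  have "?new \<subseteq> ?old \<union> ?K"
  proof
    fix i
    assume i: "i \<in> ?new"
    hence "C ! i \<in> Ek k n" "C ! Suc i \<in> Ek k n"
      using assms(1) by (auto simp: nonmono_steps_def is_chain_def)
    hence "length (run ws gs (C ! i)) = length (run ws gs (C ! Suc i))"
      by (simp add: Ek_def)
    thus "i \<in> ?old \<union> ?K"
      using i by (auto simp: nonmono_steps_def run_snoc tle_append A_def tle_iff_nth[of "[_]"])
  qed
  moreover have "finite ?K"
    by (rule finite_subset[of _ "{..<length C}"]) auto
  ultimately have "card ?new \<le> card (?old \<union> ?K)"
    using finite_nonmono_steps by (intro card_mono) auto
  also have "\<dots> \<le> card ?old + card ?K"
    by (rule card_Un_le)
  finally show ?thesis .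
qed

lemma gate_inputs_tle:
  assumes "is_chain k n C" "Suc i < length C" "i \<notin> nonmono_steps ws gs C"
    and "\<forall>j\<in>set ins. j < n + length gs"
  shows "tle (map (\<lambda>j. run ws gs (C ! i) ! j) ins) (map (\<lambda>j. run ws gs (C ! Suc i) ! j) ins)"
proof (rule tle_map_nth)
  show "tle (run ws gs (C ! i)) (run ws gs (C ! Suc i))"
    using assms(2,3) by (simp add: nonmono_steps_def)
  have "C ! i \<in> Ek k n"
    using assms(1,2) by (auto simp: is_chain_def)
  thus "\<forall>j\<in>set ins. j < length (run ws gs (C ! i))"
    using assms(4) by (simp add: Ek_def)
qed

lemma gate_inputs_in_Ek:
  assumes "circuit k n ws gs" "\<forall>w\<in>set ws. snd w \<in> Pk k (fst w)"
    and "is_chain k n C" "i < length C" "\<forall>j\<in>set ins. j < n + length gs"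
  shows "map (\<lambda>j. run ws gs (C ! i) ! j) ins \<in> Ek k (length ins)"
proof -
  have "C ! i \<in> Ek k n"
    using assms(3,4) by (auto simp: is_chain_def)
  hence "length (run ws gs (C ! i)) = n + length gs"
    by (simp add: Ek_def)
  moreover have "\<forall>v\<in>set (run ws gs (C ! i)). v < k"
    by (rule run_values_less[OF assms(1) \<open>C ! i \<in> Ek k n\<close> assms(2)])
  ultimately show ?thesis
    using assms(5) by (simp add: Ek_def)
qed

lemma card_gate_descents_le:
  fixes ws :: "(nat \<times> (nat list \<Rightarrow> nat)) list" and gs :: "gate list" and ins :: "nat list"
  assumes chain: "is_chain k n C" and ws_Pk: "\<forall>w\<in>set ws. snd w \<in> Pk k (fst w)"
    and circ: "circuit k n ws gs" and gate: "gate_ok k ws (n + length gs) (l, ins)"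
  defines "J \<equiv> nonmono_steps ws gs C"
    and "A \<equiv> \<lambda>i. map (\<lambda>j. run ws gs (C ! i) ! j) ins"
  shows "card {i. Suc i < length C \<and> i \<notin> J \<and> gapply ws l (A i) > gapply ws l (A (Suc i))}
    \<le> (if is_om l then dB k ws * (card J + 1) else 0)"
proof -
  have ins_bound: "\<forall>j\<in>set ins. j < n + length gs"
    using gate by (cases l) auto
  have A_tle: "tle (A i) (A (Suc i))" if "Suc i < length C" "i \<notin> J" for i
    using gate_inputs_tle[OF chain that[unfolded J_def] ins_bound] by (simp add: A_def)
  have A_Ek: "A i \<in> Ek k (length ins)" if "i < length C" for i
    using gate_inputs_in_Ek[OF circ ws_Pk chain that ins_bound] by (simp add: A_def)
  show ?thesis
  proof (cases l)
    case (Mono q f)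
    hence "monotone_k k (length ins) f"
      using gate by (simp add: Mk_def)
    hence "gapply ws l (A i) \<le> gapply ws l (A (Suc i))" if "Suc i < length C" "i \<notin> J" for i
      using A_tle[OF that] A_Ek[OF Suc_lessD[OF that(1)]] A_Ek[OF that(1)]
      by (simp add: Mono monotone_k_def)
    hence no_descents:
      "{i. Suc i < length C \<and> i \<notin> J \<and> gapply ws l (A i) > gapply ws l (A (Suc i))} = {}"
      by (auto dest: leD)
    show ?thesis
      unfolding no_descents by (simp add: Mono is_om_def)
  next
    case (Om i0)
    define \<omega> where "\<omega> = snd (ws ! i0)"
    have "i0 < length ws" and arity: "length ins = fst (ws ! i0)"
      using gate Om by auto
    have "{i. Suc i < length C \<and> i \<notin> J \<and> gapply ws l (A i) > gapply ws l (A (Suc i))}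
        = {i. i < length C - 1 \<and> i \<notin> J \<and> \<omega> (A i) > \<omega> (A (Suc i))}"
      by (auto simp: Om \<omega>_def)
    also have "card \<dots> \<le> dec k (length ins) {\<omega>} * (card J + 1)"
    proof (rule card_descents_outside_le)
      show "finite J" "J \<subseteq> {..<length C - 1}"
        using finite_nonmono_steps by (auto simp: J_def nonmono_steps_def)
      have "0 < length C"
        using chain by (simp add: is_chain_def)
      thus "A i \<in> Ek k (length ins)" if "i \<le> length C - 1" for i
        using that by (intro A_Ek) linarith
    qed (simp add: A_tle)
    also have "\<dots> \<le> dB k ws * (card J + 1)"
      unfolding \<omega>_def arity using \<open>i0 < length ws\<close> by (intro mult_le_mono1 dec_le_dB) simp
    finally show ?thesis
      by (simp add: Om is_om_def)
  qed
qed

lemma card_nonmono_steps_le: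
  assumes chain: "is_chain k n C" and ws_Pk: "\<forall>w\<in>set ws. snd w \<in> Pk k (fst w)"
    and "circuit k n ws gs"
  shows "card (nonmono_steps ws gs C) + 1 \<le> (dB k ws + 1) ^ weight gs"
  using \<open>circuit k n ws gs\<close>
proof (induction gs rule: rev_induct)
  case Nil
  thus ?case
    using nonmono_steps_Nil[OF chain] by (simp add: weight_def)
next
  case (snoc g gs)
  obtain l ins where g: "g = (l, ins)"
    by fastforce
  have circ: "circuit k n ws gs" and gate: "gate_ok k ws (n + length gs) (l, ins)"
    using snoc.prems by (auto simp: circuit_snoc g)
  define d where "d = dB k ws"
  define J where "J = nonmono_steps ws gs C"
  define c where "c = (if is_om l then d + 1 else 1)"
  have "card (nonmono_steps ws (gs @ [g]) C) \<le> card J + (if is_om l then d * (card J + 1) else 0)"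
    using card_nonmono_steps_snoc[OF chain, where ws=ws and gs=gs and ins=ins and l=l]
      card_gate_descents_le[OF chain ws_Pk circ gate]
    unfolding g J_def d_def by (rule order_trans[OF _ add_left_mono])
  hence "card (nonmono_steps ws (gs @ [g]) C) + 1 \<le> c * (card J + 1)"
    by (simp add: c_def split: if_splits)
  also have "\<dots> \<le> c * (d + 1) ^ weight gs"
    using snoc.IH[OF circ] by (intro mult_le_mono2) (simp add: J_def d_def)
  also have "\<dots> = (d + 1) ^ weight (gs @ [g])"
    by (simp add: c_def g weight_snoc)
  finally show ?case
    by (simp add: d_def)
qed

section \<open>Realizing an arbitrary finite system\<close>

lemma mult_add_less_mult:
  fixes i m r k :: nat
  assumes "i < m" and "r < k"
  shows "i * k + r < m * k"
proof -
  have "i * k + r < Suc i * k"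
    using \<open>r < k\<close> by simp
  also have "\<dots> \<le> m * k"
    using \<open>i < m\<close> by (intro mult_le_mono1) simp
  finally show ?thesis .
qed

text \<open>Since \<open>\<omega> b < \<omega> a\<close>, lowering coordinate \<open>j\<close> to at most \<open>c\<close> raises entry
  \<open>j * k + c\<close> of the appended part, so the codes of distinct tuples are incomparable.\<close>

definition threshold_code ::
  "nat \<Rightarrow> nat \<Rightarrow> (nat list \<Rightarrow> nat) \<Rightarrow> nat list \<Rightarrow> nat list \<Rightarrow> nat list \<Rightarrow> nat list" where
  "threshold_code k n \<omega> a b x = x @ map (\<lambda>e. \<omega> (if x ! (e div k) \<le> e mod k then a else b)) [0..<n * k]"

lemma threshold_code_antichain:
  assumes "\<omega> b < \<omega> a" and x: "x \<in> Ek k n" and y: "y \<in> Ek k n"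
    and code_tle: "tle (threshold_code k n \<omega> a b y) (threshold_code k n \<omega> a b x)"
  shows "y = x"
proof (rule ccontr)
  assume "y \<noteq> x"
  have len: "length x = n" "length y = n"
    using x y by (auto simp: Ek_def)
  then obtain j where j: "j < n" "y ! j \<noteq> x ! j"
    using \<open>y \<noteq> x\<close> nth_equalityI by metis
  have "tle y x" and entries_tle:
      "tle (map (\<lambda>e. \<omega> (if y ! (e div k) \<le> e mod k then a else b)) [0..<n * k])
           (map (\<lambda>e. \<omega> (if x ! (e div k) \<le> e mod k then a else b)) [0..<n * k])"
    using code_tle len by (simp_all add: threshold_code_def tle_append)
  hence "y ! j < x ! j"
    using j len by (auto simp: tle_iff_nth)
  define c where "c = y ! j"
  have "c < k"
    using y j len by (auto simp: Ek_def c_def)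
  hence e: "(j * k + c) div k = j" "(j * k + c) mod k = c"
    by simp_all
  have "j * k + c < n * k"
    using \<open>j < n\<close> \<open>c < k\<close> by (rule mult_add_less_mult)
  hence "\<omega> (if y ! j \<le> c then a else b) \<le> \<omega> (if x ! j \<le> c then a else b)"
    using entries_tle e by (auto simp: tle_iff_nth)
  thus False
    using \<open>y ! j < x ! j\<close> \<open>\<omega> b < \<omega> a\<close> by (simp add: c_def)
qed

definition max_below ::
  "nat \<Rightarrow> nat \<Rightarrow> (nat list \<Rightarrow> nat list) \<Rightarrow> (nat list \<Rightarrow> nat) \<Rightarrow> nat list \<Rightarrow> nat" where
  "max_below k n c f z = Max (insert 0 (f ` {y \<in> Ek k n. tle (c y) z}))"

lemma max_below_in_Mk:
  assumes "f \<in> Pk k n" and "0 < k"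
  shows "max_below k n c f \<in> Mk k m"
proof -
  have finite_vals: "finite (f ` {y \<in> Ek k n. tle (c y) z})" for z
    using finite_Ek by simp
  have "max_below k n c f z < k" for z
    using assms finite_vals by (auto simp: max_below_def Pk_def)
  moreover have "max_below k n c f z \<le> max_below k n c f z'" if "tle z z'" for z z'
    unfolding max_below_def using finite_vals tle_trans[OF _ that]
    by (intro Max_mono) auto
  ultimately show ?thesis
    by (simp add: Mk_def Pk_def monotone_k_def)
qed

lemma max_below_code:
  assumes "\<And>x y. x \<in> Ek k n \<Longrightarrow> y \<in> Ek k n \<Longrightarrow> tle (c y) (c x) \<Longrightarrow> y = x"
    and "x \<in> Ek k n"
  shows "max_below k n c f (c x) = f x"
proof -
  have "{y \<in> Ek k n. tle (c y) (c x)} = {x}"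
    using assms by auto
  thus ?thesis
    by (simp add: max_below_def)
qed

definition step_function :: "nat \<Rightarrow> nat \<Rightarrow> nat \<Rightarrow> nat list \<Rightarrow> nat" where
  "step_function c u v ys = (if ys ! 0 \<le> c then u else v)"

lemma step_function_in_Mk:
  assumes "u < k" "v < k" "u \<le> v"
  shows "step_function c u v \<in> Mk k 1"
proof -
  have "a ! 0 \<le> b ! 0" if "tle a b" "a \<in> Ek k 1" for a b
    using that by (simp add: tle_iff_nth Ek_def)
  thus ?thesis
    using assms by (auto simp: Mk_def Pk_def monotone_k_def step_function_def)
      (meson le_trans)
qed

lemma block_index_less:
  fixes e N j n q :: nat
  assumes "e < N" and "n + e * q \<le> j" and "j < q + (n + e * q)"
  shows "j < n + N * q"
proof -
  have "e * q + (j - (n + e * q)) < N * q"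
    using assms by (intro mult_add_less_mult) linarith+
  thus ?thesis
    using assms(2) by linarith
qed

text \<open>Gate \<open>e * q + t\<close> of the first layer outputs \<open>a ! t\<close> or \<open>b ! t\<close> according as
  \<open>x ! (e div k) \<le> e mod k\<close>; gate \<open>e\<close> of the second layer applies \<open>\<omega>\<^sub>i\<close> to the outputs
  \<open>e * q, \<dots>, e * q + q - 1\<close> of the first layer.\<close>

definition threshold_gates :: "nat \<Rightarrow> nat \<Rightarrow> nat \<Rightarrow> nat list \<Rightarrow> nat list \<Rightarrow> gate list" where
  "threshold_gates k n i a b =
     map (\<lambda>p. (Mono 1 (step_function (p div length a mod k) (a ! (p mod length a)) (b ! (p mod length a))),
               [p div length a div k])) [0..<n * k * length a]
     @ map (\<lambda>e. (Om i, map (\<lambda>t. n + e * length a + t) [0..<length a])) [0..<n * k]"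

lemma length_threshold_gates: "length (threshold_gates k n i a b) = n * k * length a + n * k"
  by (simp add: threshold_gates_def)

lemma circuit_threshold_gates:
  assumes "i < length ws" and "fst (ws ! i) = length a"
    and a: "a \<in> Ek k (length a)" and b: "b \<in> Ek k (length a)" and "tle a b"
  shows "circuit k n ws (threshold_gates k n i a b)"
proof -
  define q where "q = length a"
  define L1 where "L1 = map (\<lambda>p. (Mono 1 (step_function (p div q mod k) (a ! (p mod q)) (b ! (p mod q))),
    [p div q div k])) [0..<n * k * q]"
  have "step_function (p div q mod k) (a ! (p mod q)) (b ! (p mod q)) \<in> Mk k 1" if "p < n * k * q" for p
  proof (rule step_function_in_Mk)
    have "p mod q < q"
      using that by (cases "q = 0") simp_all
    thus "a ! (p mod q) < k" "b ! (p mod q) < k" "a ! (p mod q) \<le> b ! (p mod q)"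
      using a b \<open>tle a b\<close> by (auto simp: Ek_def q_def tle_iff_nth)
  qed
  moreover have "p div q div k < n" if "p < n * k * q" for p
    using that by (simp add: less_mult_imp_div_less)
  ultimately have "circuit k n ws L1"
    by (auto simp: circuit_def L1_def trans_less_add1)
  moreover have "gate_ok k ws (n + length L1) (Om i, map (\<lambda>t. n + e * q + t) [0..<q])" if "e < n * k" for e
    using assms(1,2) block_index_less[OF that] by (auto simp: L1_def q_def)
  ultimately show ?thesis
    unfolding threshold_gates_def q_def[symmetric] L1_def[symmetric]
    by (intro circuit_append) auto
qed

lemma run_threshold_gates:
  assumes x: "x \<in> Ek k n" and "length b = length a"
  shows "map (\<lambda>j. run ws (threshold_gates k n i a b) x ! j) ([0..<n] @ map (\<lambda>e. n + n * k * length a + e) [0..<n * k])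
    = threshold_code k n (snd (ws ! i)) a b x"
proof -
  define q where "q = length a"
  define N where "N = n * k"
  have "length x = n"
    using x by (simp add: Ek_def)
  define v where "v = x @ map (\<lambda>p. step_function (p div q mod k) (a ! (p mod q)) (b ! (p mod q))
    [x ! (p div q div k)]) [0..<N * q]"
  define w where "w = map (\<lambda>e. snd (ws ! i) (if x ! (e div k) \<le> e mod k then a else b)) [0..<N]"
  have omega_args: "map (\<lambda>t. v ! (n + e * q + t)) [0..<q] = (if x ! (e div k) \<le> e mod k then a else b)"
    if "e < N" for e
  proof (rule nth_equalityI)
    fix t
    assume "t < length (map (\<lambda>t. v ! (n + e * q + t)) [0..<q])"
    hence "t < q"
      by simp
    hence "e * q + t < N * q" and "(e * q + t) div q = e" and "(e * q + t) mod q = t"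
      using \<open>e < N\<close> by (simp_all add: mult_add_less_mult)
    thus "map (\<lambda>t. v ! (n + e * q + t)) [0..<q] ! t = (if x ! (e div k) \<le> e mod k then a else b) ! t"
      using \<open>t < q\<close> \<open>length x = n\<close> by (simp add: v_def nth_append step_function_def add.assoc)
  qed (simp add: q_def \<open>length b = length a\<close>)
  have "p div q div k < n" if "p < N * q" for p
    using that by (simp add: N_def less_mult_imp_div_less)
  moreover have "j < length v" if "e < N" "n + e * q \<le> j" "j < q + (n + e * q)" for e j
    using block_index_less[OF that] \<open>length x = n\<close> by (simp add: v_def)
  ultimately have "run ws (threshold_gates k n i a b) x = v @ w"
    using \<open>length x = n\<close> omega_args
    by (simp add: threshold_gates_def run_append run_parallel v_def w_def q_def N_def comp_def)
  moreover have "map (\<lambda>j. (v @ w) ! j) [0..<n] = x"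
    using \<open>length x = n\<close> by (intro nth_equalityI) (simp_all add: v_def nth_append)
  moreover have "map (\<lambda>j. (v @ w) ! j) (map (\<lambda>e. n + N * q + e) [0..<N]) = w"
    using \<open>length x = n\<close> by (intro nth_equalityI) (simp_all add: v_def w_def nth_append)
  ultimately show ?thesis
    by (simp add: threshold_code_def w_def N_def q_def)
qed

lemma realizes_via_antichain_code:
  assumes circ: "circuit k n ws gs" and ins: "\<forall>j\<in>set ins. j < n + length gs"
    and run_code: "\<forall>x\<in>Ek k n. map (\<lambda>j. run ws gs x ! j) ins = code x"
    and code_antichain: "\<And>x y. x \<in> Ek k n \<Longrightarrow> y \<in> Ek k n \<Longrightarrow> tle (code y) (code x) \<Longrightarrow> y = x"
    and "finite F" and "F \<subseteq> Pk k n" and "0 < k"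
  shows "\<exists>gs'. circuit k n ws gs' \<and> realizes k n ws gs' F"
proof -
  obtain fs where "set fs = F"
    using finite_list[OF \<open>finite F\<close>] by blast
  define out where "out = map (\<lambda>f. (Mono (length ins) (max_below k n code f), ins)) fs"
  have "circuit k n ws (gs @ out)"
    using circ ins max_below_in_Mk[OF _ \<open>0 < k\<close>] \<open>F \<subseteq> Pk k n\<close> \<open>set fs = F\<close>
    by (intro circuit_append) (auto simp: out_def)
  moreover have "realizes k n ws (gs @ out) F"
    unfolding realizes_def
  proof
    fix f
    assume "f \<in> F"
    then obtain m where m: "m < length fs" "fs ! m = f"
      using \<open>set fs = F\<close> by (metis in_set_conv_nth)
    have "run ws (gs @ out) x ! (n + length gs + m) = f x" if x: "x \<in> Ek k n" for x
    proof -
      have "length (run ws gs x) = n + length gs"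
        using x by (simp add: Ek_def)
      hence "run ws (gs @ out) x = run ws gs x @ map (\<lambda>f. max_below k n code f (code x)) fs"
        using ins run_code x by (simp add: run_append run_parallel out_def comp_def)
      thus ?thesis
        using m \<open>length (run ws gs x) = n + length gs\<close> max_below_code[OF code_antichain x]
        by (simp add: nth_append)
    qed
    moreover have "n + length gs + m < n + length (gs @ out)"
      using m by (simp add: out_def)
    ultimately show "\<exists>v < n + length (gs @ out). \<forall>x\<in>Ek k n. run ws (gs @ out) x ! v = f x"
      by blast
  qed
  ultimately show ?thesis
    by blast
qed

lemma realizing_circuit_exists:
  assumes "ws \<noteq> []" and ws: "\<forall>w\<in>set ws. snd w \<in> Pk k (fst w) \<and> \<not> monotone_k k (fst w) (snd w)"
    and "finite F" and "F \<subseteq> Pk k n"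
  shows "\<exists>gs. circuit k n ws gs \<and> realizes k n ws gs F"
proof -
  define q where "q = fst (ws ! 0)"
  define \<omega> where "\<omega> = snd (ws ! 0)"
  have "\<not> monotone_k k q \<omega>"
    using ws \<open>ws \<noteq> []\<close> by (simp add: q_def \<omega>_def)
  then obtain a b where ab: "a \<in> Ek k q" "b \<in> Ek k q" "tle a b" "\<omega> b < \<omega> a"
    unfolding monotone_k_def by (auto simp: not_le)
  have "q \<noteq> 0"
    using ab by (auto simp: Ek_def)
  hence "0 < k"
    using ab(1) by (cases a) (auto simp: Ek_def)
  define ins where "ins = [0..<n] @ map (\<lambda>e. n + n * k * q + e) [0..<n * k]"
  have "q = length a" "length b = q"
    using ab by (simp_all add: Ek_def)
  hence "circuit k n ws (threshold_gates k n 0 a b)"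
    using \<open>ws \<noteq> []\<close> ab by (intro circuit_threshold_gates) (simp_all add: q_def)
  moreover have "\<forall>j\<in>set ins. j < n + length (threshold_gates k n 0 a b)"
    by (auto simp: ins_def length_threshold_gates \<open>q = length a\<close>)
  moreover have "\<forall>x\<in>Ek k n. map (\<lambda>j. run ws (threshold_gates k n 0 a b) x ! j) ins
      = threshold_code k n \<omega> a b x"
    using run_threshold_gates \<open>q = length a\<close> \<open>length b = q\<close> by (simp add: ins_def \<omega>_def)
  ultimately show ?thesis
    using threshold_code_antichain[OF \<open>\<omega> b < \<omega> a\<close>] assms(3,4) \<open>0 < k\<close>
    by (intro realizes_via_antichain_code) blast+
qed

lemma IB_attained:
  assumes "\<exists>gs. circuit k n ws gs \<and> realizes k n ws gs F"
  shows "\<exists>gs. circuit k n ws gs \<and> realizes k n ws gs F \<and> weight gs = IB k n ws F"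
proof -
  from assms obtain gs where "circuit k n ws gs" "realizes k n ws gs F"
    by blast
  hence "\<exists>w gs. circuit k n ws gs \<and> realizes k n ws gs F \<and> weight gs = w"
    by blast
  thus ?thesis
    unfolding IB_def by (rule LeastI_ex)
qed

lemma decC_le_card_nonmono_steps:
  assumes "realizes k n ws gs F" and chain: "is_chain k n C"
  shows "decC F C \<le> card (nonmono_steps ws gs C)"
  unfolding decC_def
proof (rule card_mono[OF finite_nonmono_steps], rule subsetI)
  fix i
  assume "i \<in> {i. Suc i < length C \<and> jump F (C ! i) (C ! Suc i)}"
  then obtain f where "f \<in> F" "f (C ! i) > f (C ! Suc i)" and "Suc i < length C"
    by (auto simp: jump_def)
  then obtain v where "v < n + length gs" and v: "\<forall>x\<in>Ek k n. run ws gs x ! v = f x"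
    using assms(1) by (auto simp: realizes_def)
  have "C ! i \<in> Ek k n" "C ! Suc i \<in> Ek k n"
    using chain \<open>Suc i < length C\<close> by (auto simp: is_chain_def)
  hence "run ws gs (C ! i) ! v > run ws gs (C ! Suc i) ! v"
    and "v < length (run ws gs (C ! i))"
    using v \<open>f (C ! i) > f (C ! Suc i)\<close> \<open>v < n + length gs\<close> by (simp_all add: Ek_def)
  thus "i \<in> nonmono_steps ws gs C"
    using \<open>Suc i < length C\<close> by (auto simp: nonmono_steps_def tle_iff_nth not_le)
qed

theorem lemma1:
  fixes k n :: nat and ws :: "(nat \<times> (nat list \<Rightarrow> nat)) list"
    and F :: "(nat list \<Rightarrow> nat) set"
  assumes "k \<ge> 2"
    and "ws \<noteq> []"
    and "\<forall>w\<in>set ws. snd w \<in> Pk k (fst w) \<and> \<not> monotone_k k (fst w) (snd w)"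
    and "n \<ge> 1"
    and "finite F"
    and "F \<subseteq> Pk k n"
  shows "dec k n F \<le> (dB k ws + 1) ^ IB k n ws F - 1"
proof -
  obtain gs where circ: "circuit k n ws gs" and real: "realizes k n ws gs F"
    and weight: "weight gs = IB k n ws F"
    using IB_attained[OF realizing_circuit_exists[OF assms(2,3,5,6)]] by blast
  have ws_Pk: "\<forall>w\<in>set ws. snd w \<in> Pk k (fst w)"
    using assms(3) by blast
  have "decC F C \<le> (dB k ws + 1) ^ IB k n ws F - 1" if "is_chain k n C" for C
    using decC_le_card_nonmono_steps[OF real that] card_nonmono_steps_le[OF that ws_Pk circ]
    by (simp add: weight)
  moreover have "is_chain k n [replicate n 0]"
    using assms(1) by (auto simp: is_chain_def Ek_def)
  ultimately show ?thesis
    unfolding dec_def using finite_decC_chains by (subst Max_le_iff) auto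
qed

end
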